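(* Let $\lvert\psi\rangle$ be an $n$-qubit pure state. Then \[ \frac{4 \eta - 1}{3} \leq F_\mathcal{S}(\lvert\psi\rangle). \]
   Context: For $x=(a,b)\in\mathbb F_2^{2n}$ the Weyl operator is $W_x = i^{a\cdot b}X^{a_1}Z^{b_1}\otimes\cdots\otimes X^{a_n}Z^{b_n}$. For an $n$-qubit pure state $\lvert\psi\rangle$, $p_\psi(x)=2^{-n}\langle\psi|W_x|\psi\rangle^2$ (a probability distribution on $\mathbb F_2^{2n}$), $q_\psi(x)=\sum_y p_\psi(y)p_\psi(x+y)$, and $\eta \coloneqq \mathbb{E}_{x\sim q_\psi}[2^n p_\psi(x)] = 4^n\sum_{x\in\mathbb F_2^{2n}} p_\psi(x)^3$. The stabilizer fidelity is $F_\mathcal{S}(\lvert\psi\rangle)=\max_{\lvert\phi\rangle\text{ stabilizer}}\lvert\langle\phi|\psi\rangle\rvert^2$. *)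

theory Defs
  imports Complex_Main
begin

text \<open>Computational basis of n qubits: bit strings of length n (qubit i is entry i).
  A state vector is a function from bit strings to complex amplitudes; only the values
  on bit strings of length n matter.\<close>

definition bits :: "nat \<Rightarrow> bool list set" where
  "bits n = {xs. length xs = n}"

text \<open>The index set F_2^{2n} of Weyl operators: pairs (a,b) of bit strings of length n.\<close>
definition weyl_index :: "nat \<Rightarrow> (bool list \<times> bool list) set" where
  "weyl_index n = bits n \<times> bits n"

definition bxor :: "bool list \<Rightarrow> bool list \<Rightarrow> bool list" where
  "bxor u v = map2 (\<noteq>) u v"

definition bdot :: "bool list \<Rightarrow> bool list \<Rightarrow> nat" where
  "bdot u v = length (filter id (map2 (\<and>) u v))"

definition padd :: "bool list \<times> bool list \<Rightarrow> bool list \<times> bool list \<Rightarrow> bool list \<times> bool list" where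
  "padd x y = (bxor (fst x) (fst y), bxor (snd x) (snd y))"

text \<open>W_(a,b) = i^(a.b) X^a1 Z^b1 (x) ... (x) X^an Z^bn applied to a state:
  (X^a Z^b psi)(y) = (-1)^(b.(y+a)) psi(y+a).\<close>
definition weyl :: "bool list \<times> bool list \<Rightarrow> (bool list \<Rightarrow> complex) \<Rightarrow> (bool list \<Rightarrow> complex)" where
  "weyl x \<psi> = (\<lambda>y. \<i> ^ bdot (fst x) (snd x) * (-1) ^ bdot (snd x) (bxor y (fst x))
                   * \<psi> (bxor y (fst x)))"

definition inner :: "nat \<Rightarrow> (bool list \<Rightarrow> complex) \<Rightarrow> (bool list \<Rightarrow> complex) \<Rightarrow> complex" where
  "inner n \<phi> \<psi> = (\<Sum>y\<in>bits n. cnj (\<phi> y) * \<psi> y)"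

definition pure_state :: "nat \<Rightarrow> (bool list \<Rightarrow> complex) \<Rightarrow> bool" where
  "pure_state n \<psi> \<longleftrightarrow> inner n \<psi> \<psi> = 1"

text \<open>p_psi(x) = 2^(-n) <psi|W_x|psi>^2 (the expectation value is real since W_x is Hermitian).\<close>
definition char_dist :: "nat \<Rightarrow> (bool list \<Rightarrow> complex) \<Rightarrow> bool list \<times> bool list \<Rightarrow> real" where
  "char_dist n \<psi> x = (cmod (inner n \<psi> (weyl x \<psi>)))\<^sup>2 / 2 ^ n"

definition conv_dist :: "nat \<Rightarrow> (bool list \<Rightarrow> complex) \<Rightarrow> bool list \<times> bool list \<Rightarrow> real" where
  "conv_dist n \<psi> x = (\<Sum>y\<in>weyl_index n. char_dist n \<psi> y * char_dist n \<psi> (padd x y))"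

text \<open>eta = E_{x ~ q_psi} [2^n p_psi(x)].\<close>
definition eta :: "nat \<Rightarrow> (bool list \<Rightarrow> complex) \<Rightarrow> real" where
  "eta n \<psi> = (\<Sum>x\<in>weyl_index n. conv_dist n \<psi> x * (2 ^ n * char_dist n \<psi> x))"

definition stabilizer_state :: "nat \<Rightarrow> (bool list \<Rightarrow> complex) \<Rightarrow> bool" where
  "stabilizer_state n \<phi> \<longleftrightarrow> pure_state n \<phi> \<and>
     (\<exists>M \<subseteq> weyl_index n. card M = 2 ^ n \<and>
        (\<forall>x\<in>M. \<exists>s\<in>{1, -1::complex}. \<forall>y\<in>bits n. s * weyl x \<phi> y = \<phi> y))"

definition stabilizer_fidelity :: "nat \<Rightarrow> (bool list \<Rightarrow> complex) \<Rightarrow> real" where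
  "stabilizer_fidelity n \<psi> = Sup {(cmod (inner n \<phi> \<psi>))\<^sup>2 | \<phi>. stabilizer_state n \<phi>}"

end

theory Submission
  imports Defs "HOL-Analysis.Convex"
begin

text \<open>Write \<open>f x = \<langle>\<psi>, W\<^sub>x \<psi>\<rangle>\<^sup>2 \<in> [0, 1]\<close>. The completeness relation of the Weyl operators
  gives \<open>\<Sum>\<^sub>x f x = 2\<^sup>n\<close> and shows that \<open>f\<close> is an eigenvector of the symplectic Fourier
  transform, whence \<open>\<eta> = 2\<^sup>-\<^sup>n \<Sum>\<^sub>x f x\<^sup>3\<close>. Since \<open>t\<^sup>3 \<le> t/4\<close> for \<open>t \<le> 1/2\<close>, this gives
  \<open>\<eta> \<le> 1/4 + 3/4 \<cdot> 2\<^sup>-\<^sup>n \<Sum>\<^sub>x\<^sub>\<in>\<^sub>H f x\<close> for the heavy set \<open>H = {f > 1/2}\<close>.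
  Anticommuting \<open>W\<^sub>x, W\<^sub>y\<close> have \<open>f x + f y \<le> 1\<close>, so \<open>H\<close> is isotropic and extends to a
  maximal stabilizer group \<open>S\<close> with \<open>|S| = 2\<^sup>n\<close>. Twisting the signs of \<open>S\<close> by characters gives
  projectors \<open>P\<^sub>z\<close> onto stabilizer states with weights \<open>w\<^sub>z = \<langle>\<psi>, P\<^sub>z \<psi>\<rangle>\<close> such that
  \<open>\<Sum>\<^sub>z w\<^sub>z = 2\<^sup>n\<close> and \<open>\<Sum>\<^sub>z w\<^sub>z\<^sup>2 = \<Sum>\<^sub>x\<^sub>\<in>\<^sub>S f x\<close>; hence some stabilizer fidelity
  \<open>max\<^sub>z w\<^sub>z\<close> is at least \<open>2\<^sup>-\<^sup>n \<Sum>\<^sub>x\<^sub>\<in>\<^sub>S f x \<ge> 2\<^sup>-\<^sup>n \<Sum>\<^sub>x\<^sub>\<in>\<^sub>H f x\<close>.\<close>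

section \<open>Bit strings\<close>

lemma mem_bits_iff [simp]: "xs \<in> bits n \<longleftrightarrow> length xs = n"
  by (simp add: bits_def)

lemma finite_bits [simp]: "finite (bits n)"
  unfolding bits_def using finite_lists_length_eq[of "UNIV :: bool set" n] by simp

lemma card_bits: "card (bits n) = 2 ^ n"
  unfolding bits_def using card_lists_length_eq[of "UNIV :: bool set" n] by simp

lemma sum_bits_Suc:
  "sum f (bits (Suc n)) = (\<Sum>b\<in>bits n. f (True # b)) + (\<Sum>b\<in>bits n. f (False # b))"
proof -
  have "bits (Suc n) = (\<lambda>b. True # b) ` bits n \<union> (\<lambda>b. False # b) ` bits n"
    by (auto simp: bits_def length_Suc_conv image_iff)
  then have "sum f (bits (Suc n)) = sum f ((\<lambda>b. True # b) ` bits n) + sum f ((\<lambda>b. False # b) ` bits n)"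
    by (simp only:) (rule sum.union_disjoint, auto)
  then show ?thesis
    by (simp add: sum.reindex inj_on_def)
qed

lemma length_bxor [simp]: "length (bxor u v) = min (length u) (length v)"
  by (simp add: bxor_def)

lemma bxor_Nil [simp]: "bxor [] v = []" "bxor u [] = []"
  by (simp_all add: bxor_def)

lemma bxor_Cons [simp]: "bxor (x # xs) (y # ys) = (x \<noteq> y) # bxor xs ys"
  by (simp add: bxor_def)

lemma bdot_Nil [simp]: "bdot [] v = 0" "bdot u [] = 0"
  by (simp_all add: bdot_def)

lemma bdot_Cons [simp]: "bdot (x # xs) (y # ys) = (if x \<and> y then 1 else 0) + bdot xs ys"
  by (simp add: bdot_def)

lemma bxor_commute: "bxor u v = bxor v u"
  by (induction u v rule: list_induct2') auto

lemma bdot_commute: "bdot u v = bdot v u"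
  by (induction u v rule: list_induct2') auto

lemma bxor_assoc: "bxor (bxor u v) w = bxor u (bxor v w)"
  by (induction u v arbitrary: w rule: list_induct2') (auto, case_tac w, auto)

lemma bxor_self: "bxor u u = replicate (length u) False"
  by (induction u) auto

lemma bxor_replicate_False: "length u \<le> m \<Longrightarrow> bxor u (replicate m False) = u"
  by (induction u arbitrary: m) (simp, case_tac m, auto)

lemma bxor_cancel_right: "length u = length v \<Longrightarrow> bxor (bxor u v) v = u"
  by (simp add: bxor_assoc bxor_self bxor_replicate_False)

lemma bxor_eq_replicate_False_iff:
  "length u = length v \<Longrightarrow> bxor u v = replicate (length u) False \<longleftrightarrow> u = v"
  by (induction u v rule: list_induct2) auto

lemma bdot_replicate_False [simp]: "bdot (replicate m False) v = 0" "bdot v (replicate m False) = 0"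
  by (induction v arbitrary: m) (simp_all, case_tac m, auto, case_tac m, auto)

lemma neg_one_power_bdot_bxor_left:
  assumes "length u = length w" "length v = length w"
  shows "(-1 :: 'a :: comm_ring_1) ^ bdot (bxor u v) w = (-1) ^ bdot u w * (-1) ^ bdot v w"
proof -
  have "length u = length v" "length v = length w"
    using assms by simp_all
  then show ?thesis
    by (induction u v w rule: list_induct3) (auto simp: power_add)
qed

lemma neg_one_power_bdot_bxor_right:
  "length u = length w \<Longrightarrow> length v = length w \<Longrightarrow>
    (-1 :: 'a :: comm_ring_1) ^ bdot w (bxor u v) = (-1) ^ bdot w u * (-1) ^ bdot w v"
  by (metis bdot_commute neg_one_power_bdot_bxor_left)

lemma neg_one_power_mult_self: "(-1 :: 'a :: comm_ring_1) ^ k * (-1) ^ k = 1"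
  by (simp flip: power_add)

lemma four_power_eq: "(4 :: 'a :: comm_semiring_1) ^ n = 2 ^ n * 2 ^ n"
  by (simp flip: power_mult_distrib)

lemma sum_neg_one_power_bdot:
  "length v = n \<Longrightarrow>
    (\<Sum>b\<in>bits n. (-1 :: complex) ^ bdot b v) = (if v = replicate n False then 2 ^ n else 0)"
proof (induction n arbitrary: v)
  case (Suc n)
  then obtain h v' where v: "v = h # v'" "length v' = n"
    by (cases v) auto
  have "(\<Sum>b\<in>bits (Suc n). (-1 :: complex) ^ bdot b v)
      = (1 + (-1) ^ (if h then 1 else 0)) * (\<Sum>b\<in>bits n. (-1) ^ bdot b v')"
    by (simp add: sum_bits_Suc v power_add sum_distrib_left algebra_simps sum.distrib)
  then show ?case
    using Suc.IH[OF v(2)] v by auto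
qed (simp add: bits_def)

lemma bij_betw_bxor: "a \<in> bits n \<Longrightarrow> bij_betw (\<lambda>u. bxor u a) (bits n) (bits n)"
  by (rule bij_betw_byWitness[where f' = "\<lambda>u. bxor u a"]) (auto simp: bxor_cancel_right)

lemma sum_bits_bxor: "a \<in> bits n \<Longrightarrow> (\<Sum>u\<in>bits n. g (bxor u a)) = (\<Sum>u\<in>bits n. g u)"
  using sum.reindex_bij_betw[OF bij_betw_bxor, of a n g] by simp

section \<open>Weyl indices and the phases of Weyl operators\<close>

definition weyl_zero :: "nat \<Rightarrow> bool list \<times> bool list" where
  "weyl_zero n = (replicate n False, replicate n False)"

definition symp_form :: "bool list \<times> bool list \<Rightarrow> bool list \<times> bool list \<Rightarrow> nat" where
  "symp_form x y = bdot (snd x) (fst y) + bdot (fst x) (snd y)"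

definition commuting :: "bool list \<times> bool list \<Rightarrow> bool list \<times> bool list \<Rightarrow> bool" where
  "commuting x y \<longleftrightarrow> even (symp_form x y)"

lemma mem_weyl_index_iff: "x \<in> weyl_index n \<longleftrightarrow> length (fst x) = n \<and> length (snd x) = n"
  by (cases x) (simp add: weyl_index_def)

lemma finite_weyl_index [simp]: "finite (weyl_index n)"
  by (simp add: weyl_index_def)

lemma card_weyl_index: "card (weyl_index n) = 4 ^ n"
  by (simp add: weyl_index_def card_cartesian_product card_bits flip: power_mult_distrib)

lemma sum_weyl_index: "(\<Sum>x\<in>weyl_index n. g x) = (\<Sum>a\<in>bits n. \<Sum>b\<in>bits n. g (a, b))"
  by (simp add: weyl_index_def sum.cartesian_product)

lemma weyl_zero_in_weyl_index [simp]: "weyl_zero n \<in> weyl_index n"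
  by (simp add: mem_weyl_index_iff weyl_zero_def)

lemma padd_in_weyl_index [simp]:
  "x \<in> weyl_index n \<Longrightarrow> y \<in> weyl_index n \<Longrightarrow> padd x y \<in> weyl_index n"
  by (simp add: mem_weyl_index_iff padd_def)

lemma padd_commute: "padd x y = padd y x"
  by (simp add: padd_def bxor_commute)

lemma padd_assoc: "padd (padd x y) z = padd x (padd y z)"
  by (simp add: padd_def bxor_assoc)

lemma padd_left_commute: "padd x (padd y z) = padd y (padd x z)"
  by (metis padd_assoc padd_commute)

lemma padd_self: "x \<in> weyl_index n \<Longrightarrow> padd x x = weyl_zero n"
  by (simp add: padd_def weyl_zero_def mem_weyl_index_iff bxor_self)

lemma padd_weyl_zero_right: "x \<in> weyl_index n \<Longrightarrow> padd x (weyl_zero n) = x"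
  by (cases x) (simp add: padd_def weyl_zero_def mem_weyl_index_iff bxor_replicate_False)

lemma padd_weyl_zero_left: "x \<in> weyl_index n \<Longrightarrow> padd (weyl_zero n) x = x"
  by (metis padd_commute padd_weyl_zero_right)

lemma padd_cancel_left: "x \<in> weyl_index n \<Longrightarrow> y \<in> weyl_index n \<Longrightarrow> padd x (padd x y) = y"
  by (simp add: padd_weyl_zero_left padd_self flip: padd_assoc)

lemma padd_eq_weyl_zero_iff:
  "x \<in> weyl_index n \<Longrightarrow> y \<in> weyl_index n \<Longrightarrow> padd x y = weyl_zero n \<longleftrightarrow> x = y"
  by (metis padd_cancel_left padd_self padd_weyl_zero_right)

lemma symp_form_commute: "symp_form x y = symp_form y x"
  by (simp add: symp_form_def bdot_commute)

lemma symp_form_weyl_zero [simp]: "symp_form (weyl_zero n) y = 0" "symp_form y (weyl_zero n) = 0"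
  by (simp_all add: symp_form_def weyl_zero_def)

lemma neg_one_power_symp: "(-1 :: 'a :: ring_1) ^ symp_form x y = (if commuting x y then 1 else -1)"
  by (simp add: commuting_def minus_one_power_iff)

lemma neg_one_power_symp_padd_left:
  "x \<in> weyl_index n \<Longrightarrow> y \<in> weyl_index n \<Longrightarrow> z \<in> weyl_index n \<Longrightarrow>
    (-1 :: 'a :: comm_ring_1) ^ symp_form (padd x y) z = (-1) ^ symp_form x z * (-1) ^ symp_form y z"
  by (simp add: symp_form_def padd_def mem_weyl_index_iff power_add neg_one_power_bdot_bxor_left)

lemma neg_one_power_symp_padd_right:
  "x \<in> weyl_index n \<Longrightarrow> y \<in> weyl_index n \<Longrightarrow> z \<in> weyl_index n \<Longrightarrow>
    (-1 :: 'a :: comm_ring_1) ^ symp_form z (padd x y) = (-1) ^ symp_form z x * (-1) ^ symp_form z y"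
  by (metis symp_form_commute neg_one_power_symp_padd_left)

lemma commuting_commute: "commuting x y \<longleftrightarrow> commuting y x"
  by (simp add: commuting_def symp_form_commute)

lemma commuting_self: "commuting x x"
  by (simp add: commuting_def symp_form_def bdot_commute)

lemma commuting_weyl_zero [simp]: "commuting (weyl_zero n) y" "commuting y (weyl_zero n)"
  by (simp_all add: commuting_def)

lemma commuting_padd_right:
  assumes "x \<in> weyl_index n" "y \<in> weyl_index n" "z \<in> weyl_index n"
  shows "commuting z (padd x y) \<longleftrightarrow> (commuting z x \<longleftrightarrow> commuting z y)"
  using neg_one_power_symp_padd_right[where 'a = int, OF assms]
  by (auto simp: neg_one_power_symp split: if_splits)

lemma commuting_padd_left:
  "x \<in> weyl_index n \<Longrightarrow> y \<in> weyl_index n \<Longrightarrow> z \<in> weyl_index n \<Longrightarrow>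
    commuting (padd x y) z \<longleftrightarrow> (commuting x z \<longleftrightarrow> commuting y z)"
  by (simp add: commuting_commute[of _ z] commuting_padd_right)

lemma sum_neg_one_power_symp:
  assumes "w \<in> weyl_index n"
  shows "(\<Sum>z\<in>weyl_index n. (-1 :: complex) ^ symp_form z w) = (if w = weyl_zero n then 4 ^ n else 0)"
proof -
  obtain a b where w: "w = (a, b)" "length a = n" "length b = n"
    using assms by (cases w) (auto simp: mem_weyl_index_iff)
  have "(\<Sum>z\<in>weyl_index n. (-1 :: complex) ^ symp_form z w)
      = (\<Sum>a'\<in>bits n. (-1 :: complex) ^ bdot a' b) * (\<Sum>b'\<in>bits n. (-1) ^ bdot b' a)"
    unfolding sum_weyl_index w symp_form_def sum_product
    by (simp add: power_add bdot_commute mult.commute)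
  also have "\<dots> = (if w = weyl_zero n then 4 ^ n else 0)"
    using w by (simp add: sum_neg_one_power_bdot weyl_zero_def flip: power_mult_distrib)
  finally show ?thesis .
qed

text \<open>\<open>weyl_scalar x\<close> is the prefactor \<open>\<i>\<^bsup>a\<cdot>b\<^esup>\<close> of \<open>W\<^sub>x\<close>, \<open>x = (a, b)\<close>, and \<open>weyl_phase x y\<close> is the
  scalar in \<open>W\<^sub>x W\<^sub>y = weyl_phase x y \<cdot> W\<^sub>x\<^sub>+\<^sub>y\<close> (lemma \<open>weyl_mult\<close>).\<close>

definition weyl_scalar :: "bool list \<times> bool list \<Rightarrow> complex" where
  "weyl_scalar x = \<i> ^ bdot (fst x) (snd x)"

definition weyl_phase :: "bool list \<times> bool list \<Rightarrow> bool list \<times> bool list \<Rightarrow> complex" where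
  "weyl_phase x y = weyl_scalar x * weyl_scalar y * (-1) ^ bdot (snd x) (fst y) / weyl_scalar (padd x y)"

lemma weyl_scalar_nonzero [simp]: "weyl_scalar x \<noteq> 0"
  by (simp add: weyl_scalar_def)

lemma weyl_scalar_mult_self: "weyl_scalar x * weyl_scalar x = (-1) ^ bdot (fst x) (snd x)"
  by (simp add: weyl_scalar_def flip: power_mult_distrib)

lemma weyl_scalar_weyl_zero [simp]: "weyl_scalar (weyl_zero n) = 1"
  by (simp add: weyl_scalar_def weyl_zero_def)

lemma weyl_phase_self: "x \<in> weyl_index n \<Longrightarrow> weyl_phase x x = 1"
  by (simp add: weyl_phase_def padd_self weyl_scalar_mult_self bdot_commute neg_one_power_mult_self)

lemma weyl_phase_weyl_zero_left: "y \<in> weyl_index n \<Longrightarrow> weyl_phase (weyl_zero n) y = 1"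
  by (simp add: weyl_phase_def padd_weyl_zero_left) (simp add: weyl_zero_def)

lemma weyl_phase_weyl_zero_right: "y \<in> weyl_index n \<Longrightarrow> weyl_phase y (weyl_zero n) = 1"
  by (simp add: weyl_phase_def padd_weyl_zero_right) (simp add: weyl_zero_def)

lemma weyl_phase_mult_swap:
  assumes x: "x \<in> weyl_index n" and y: "y \<in> weyl_index n"
  shows "weyl_phase x y * weyl_phase y x = 1"
proof -
  define J where "J = weyl_scalar (padd x y)"
  have "J * J = (-1) ^ bdot (fst x) (snd x) * (-1) ^ bdot (fst x) (snd y)
      * ((-1) ^ bdot (fst y) (snd x) * (-1) ^ bdot (fst y) (snd y))"
    using x y unfolding J_def weyl_scalar_mult_self
    by (simp add: padd_def mem_weyl_index_iff neg_one_power_bdot_bxor_left neg_one_power_bdot_bxor_right)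
  also have "\<dots> = (weyl_scalar x * weyl_scalar x) * (weyl_scalar y * weyl_scalar y)
      * ((-1) ^ bdot (snd x) (fst y) * (-1) ^ bdot (snd y) (fst x))"
    unfolding weyl_scalar_mult_self by (simp add: bdot_commute ac_simps)
  also have "\<dots> = weyl_phase x y * weyl_phase y x * (J * J)"
    by (simp add: weyl_phase_def J_def padd_commute field_simps)
  finally show ?thesis
    by (simp add: J_def)
qed

lemma weyl_phase_swap:
  "x \<in> weyl_index n \<Longrightarrow> y \<in> weyl_index n \<Longrightarrow> weyl_phase x y = (-1) ^ symp_form x y * weyl_phase y x"
  by (simp add: weyl_phase_def symp_form_def power_add padd_commute bdot_commute
      neg_one_power_mult_self ac_simps)

lemma weyl_phase_commuting:
  "x \<in> weyl_index n \<Longrightarrow> y \<in> weyl_index n \<Longrightarrow> commuting x y \<Longrightarrow> weyl_phase y x = weyl_phase x y"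
  by (simp add: weyl_phase_swap[of x n y] neg_one_power_symp)

lemma weyl_phase_cocycle:
  assumes x: "x \<in> weyl_index n" and y: "y \<in> weyl_index n" and z: "z \<in> weyl_index n"
  shows "weyl_phase x y * weyl_phase (padd x y) z = weyl_phase y z * weyl_phase x (padd y z)"
proof -
  have "(-1 :: complex) ^ bdot (snd (padd x y)) (fst z) = (-1) ^ bdot (snd x) (fst z) * (-1) ^ bdot (snd y) (fst z)"
    "(-1 :: complex) ^ bdot (snd x) (fst (padd y z)) = (-1) ^ bdot (snd x) (fst y) * (-1) ^ bdot (snd x) (fst z)"
    using x y z by (simp_all add: padd_def mem_weyl_index_iff
        neg_one_power_bdot_bxor_left neg_one_power_bdot_bxor_right)
  then show ?thesis
    by (simp add: weyl_phase_def padd_assoc field_simps)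
qed

text \<open>Both sides are the phase of \<open>W\<^sub>e W\<^sub>t W\<^sub>e\<^sub>' W\<^sub>u\<close>, before and after swapping the commuting
  factors \<open>W\<^sub>t\<close> and \<open>W\<^sub>e\<^sub>'\<close>; the proof uses only the cocycle identity.\<close>

lemma weyl_phase_interchange:
  assumes e: "e \<in> weyl_index n" and t: "t \<in> weyl_index n" and e': "e' \<in> weyl_index n"
    and u: "u \<in> weyl_index n" and comm: "commuting t e'"
  shows "weyl_phase e t * weyl_phase e' u * weyl_phase (padd e t) (padd e' u)
    = weyl_phase e e' * weyl_phase t u * weyl_phase (padd e e') (padd t u)"
proof -
  have "weyl_phase e t * weyl_phase e' u * weyl_phase (padd e t) (padd e' u)
      = weyl_phase e' u * weyl_phase t (padd e' u) * weyl_phase e (padd t (padd e' u))"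
    using weyl_phase_cocycle[OF e t, of "padd e' u"] e' u by (simp add: ac_simps)
  also have "\<dots> = weyl_phase t e' * weyl_phase (padd t e') u * weyl_phase e (padd t (padd e' u))"
    using weyl_phase_cocycle[OF t e' u] by simp
  also have "\<dots> = weyl_phase e' t * weyl_phase (padd e' t) u * weyl_phase e (padd e' (padd t u))"
    using weyl_phase_commuting[OF t e' comm] by (simp add: padd_commute padd_left_commute)
  also have "\<dots> = weyl_phase t u * weyl_phase e' (padd t u) * weyl_phase e (padd e' (padd t u))"
    using weyl_phase_cocycle[OF e' t u] by simp
  also have "\<dots> = weyl_phase e e' * weyl_phase t u * weyl_phase (padd e e') (padd t u)"
    using weyl_phase_cocycle[OF e e', of "padd t u"] t u by (simp add: ac_simps)
  finally show ?thesis .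
qed

lemma weyl_phase_commuting_sign:
  assumes "x \<in> weyl_index n" "y \<in> weyl_index n" "commuting x y"
  shows "weyl_phase x y = 1 \<or> weyl_phase x y = -1"
proof -
  have "weyl_phase x y * weyl_phase x y = 1"
    using weyl_phase_mult_swap weyl_phase_commuting assms by metis
  then show ?thesis
    by (metis square_eq_1_iff)
qed

section \<open>Weyl operators acting on states\<close>

lemma weyl_mult:
  assumes x: "x \<in> weyl_index n" and y: "y \<in> weyl_index n" and u: "u \<in> bits n"
  shows "weyl x (weyl y \<phi>) u = weyl_phase x y * weyl (padd x y) \<phi> u"
proof -
  obtain a b a' b' where xy: "x = (a, b)" "y = (a', b')"
    by (cases x, cases y)
  have l: "length a = n" "length b = n" "length a' = n" "length b' = n" "length u = n"
    using x y u by (auto simp: xy mem_weyl_index_iff)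
  have sign: "(-1 :: complex) ^ bdot b (bxor u a) * (-1) ^ bdot b' (bxor u (bxor a a'))
      = (-1) ^ bdot b a' * (-1) ^ bdot (bxor b b') (bxor u (bxor a a'))"
    using l by (simp add: neg_one_power_bdot_bxor_left neg_one_power_bdot_bxor_right
        neg_one_power_mult_self ac_simps flip: bxor_assoc)
  show ?thesis
    unfolding xy weyl_def weyl_phase_def weyl_scalar_def padd_def
    by (simp add: bxor_assoc sign field_simps)
qed

lemma weyl_weyl_zero: "u \<in> bits n \<Longrightarrow> weyl (weyl_zero n) \<phi> u = \<phi> u"
  by (simp add: weyl_def weyl_zero_def bxor_replicate_False)

lemma weyl_cong:
  "(\<And>v. v \<in> bits n \<Longrightarrow> \<phi> v = \<chi> v) \<Longrightarrow> x \<in> weyl_index n \<Longrightarrow> u \<in> bits n \<Longrightarrow>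
    weyl x \<phi> u = weyl x \<chi> u"
  by (simp add: weyl_def mem_weyl_index_iff)

lemma weyl_cmult: "weyl x (\<lambda>v. c * \<phi> v) u = c * weyl x \<phi> u"
  by (simp add: weyl_def algebra_simps)

lemma weyl_sum: "weyl x (\<lambda>v. \<Sum>i\<in>I. g i v) u = (\<Sum>i\<in>I. weyl x (g i) u)"
  by (simp add: weyl_def sum_distrib_left)

lemma weyl_commute:
  "x \<in> weyl_index n \<Longrightarrow> y \<in> weyl_index n \<Longrightarrow> u \<in> bits n \<Longrightarrow>
    weyl x (weyl y \<phi>) u = (-1) ^ symp_form x y * weyl y (weyl x \<phi>) u"
  by (simp add: weyl_mult weyl_phase_swap[of x n y] padd_commute)

lemma weyl_weyl_self: "x \<in> weyl_index n \<Longrightarrow> u \<in> bits n \<Longrightarrow> weyl x (weyl x \<phi>) u = \<phi> u"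
  by (simp add: weyl_mult weyl_phase_self padd_self weyl_weyl_zero)

lemma cnj_inner: "cnj (Defs.inner n \<phi> \<chi>) = Defs.inner n \<chi> \<phi>"
  by (simp add: Defs.inner_def mult.commute)

lemma inner_cong:
  "(\<And>v. v \<in> bits n \<Longrightarrow> \<phi> v = \<phi>' v) \<Longrightarrow> (\<And>v. v \<in> bits n \<Longrightarrow> \<chi> v = \<chi>' v) \<Longrightarrow>
    Defs.inner n \<phi> \<chi> = Defs.inner n \<phi>' \<chi>'"
  by (simp add: Defs.inner_def)

lemma inner_cmult_right: "Defs.inner n \<phi> (\<lambda>v. c * \<chi> v) = c * Defs.inner n \<phi> \<chi>"
  by (simp add: Defs.inner_def sum_distrib_left ac_simps)

lemma inner_cmult_left: "Defs.inner n (\<lambda>v. c * \<phi> v) \<chi> = cnj c * Defs.inner n \<phi> \<chi>"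
  by (simp add: Defs.inner_def sum_distrib_left ac_simps)

lemma inner_add_right: "Defs.inner n \<phi> (\<lambda>v. \<chi> v + \<chi>' v) = Defs.inner n \<phi> \<chi> + Defs.inner n \<phi> \<chi>'"
  by (simp add: Defs.inner_def algebra_simps sum.distrib)

lemma inner_add_left: "Defs.inner n (\<lambda>v. \<phi> v + \<phi>' v) \<chi> = Defs.inner n \<phi> \<chi> + Defs.inner n \<phi>' \<chi>"
  by (simp add: Defs.inner_def algebra_simps sum.distrib)

lemma inner_sum_right: "Defs.inner n \<phi> (\<lambda>v. \<Sum>i\<in>I. g i v) = (\<Sum>i\<in>I. Defs.inner n \<phi> (g i))"
  by (simp add: Defs.inner_def sum_distrib_left sum.swap[of _ I])

lemma inner_sum_left: "Defs.inner n (\<lambda>v. \<Sum>i\<in>I. g i v) \<chi> = (\<Sum>i\<in>I. Defs.inner n (g i) \<chi>)"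
  by (simp add: Defs.inner_def sum_distrib_right sum.swap[of _ I])

lemma inner_self: "Defs.inner n \<phi> \<phi> = of_real (\<Sum>v\<in>bits n. (cmod (\<phi> v))\<^sup>2)"
  unfolding Defs.inner_def of_real_sum complex_norm_square by (simp add: mult.commute)

lemma pure_state_norm: "pure_state n \<phi> \<Longrightarrow> (\<Sum>v\<in>bits n. (cmod (\<phi> v))\<^sup>2) = 1"
  by (metis inner_self of_real_eq_1_iff pure_state_def)

lemma inner_cauchy_schwarz:
  "(cmod (Defs.inner n \<phi> \<chi>))\<^sup>2 \<le> (\<Sum>v\<in>bits n. (cmod (\<phi> v))\<^sup>2) * (\<Sum>v\<in>bits n. (cmod (\<chi> v))\<^sup>2)"
proof -
  have "cmod (Defs.inner n \<phi> \<chi>) \<le> (\<Sum>v\<in>bits n. cmod (\<phi> v) * cmod (\<chi> v))"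
    unfolding Defs.inner_def by (rule order_trans[OF norm_sum]) (simp add: norm_mult)
  then have "(cmod (Defs.inner n \<phi> \<chi>))\<^sup>2 \<le> (\<Sum>v\<in>bits n. cmod (\<phi> v) * cmod (\<chi> v))\<^sup>2"
    by (simp add: power_mono)
  also have "\<dots> \<le> (\<Sum>v\<in>bits n. (cmod (\<phi> v))\<^sup>2) * (\<Sum>v\<in>bits n. (cmod (\<chi> v))\<^sup>2)"
    by (rule Cauchy_Schwarz_ineq_sum)
  finally show ?thesis .
qed

lemma pure_state_inner_le_1:
  "pure_state n \<phi> \<Longrightarrow> pure_state n \<chi> \<Longrightarrow> (cmod (Defs.inner n \<phi> \<chi>))\<^sup>2 \<le> 1"
  using inner_cauchy_schwarz[of n \<phi> \<chi>] by (simp add: pure_state_norm)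

lemma inner_weyl_left:
  assumes x: "x \<in> weyl_index n"
  shows "Defs.inner n (weyl x \<phi>) \<chi> = Defs.inner n \<phi> (weyl x \<chi>)"
proof -
  obtain a b where x_ab: "x = (a, b)" "length a = n" "length b = n"
    using x by (cases x) (auto simp: mem_weyl_index_iff)
  let ?g = "\<lambda>w. cnj (\<i> ^ bdot a b * (-1) ^ bdot b w * \<phi> w) * \<chi> (bxor w a)"
  have "Defs.inner n (weyl x \<phi>) \<chi> = (\<Sum>u\<in>bits n. ?g (bxor u a))"
    unfolding Defs.inner_def x_ab weyl_def by (intro sum.cong) (auto simp: bxor_cancel_right x_ab)
  also have "\<dots> = (\<Sum>u\<in>bits n. ?g u)"
    by (rule sum_bits_bxor) (simp add: x_ab)
  also have "\<dots> = Defs.inner n \<phi> (weyl x \<chi>)"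
    unfolding Defs.inner_def x_ab weyl_def
    by (intro sum.cong) (auto simp: x_ab neg_one_power_bdot_bxor_right bdot_commute
        power_mult_distrib[symmetric] ac_simps)
  finally show ?thesis .
qed

lemma inner_weyl_weyl:
  "x \<in> weyl_index n \<Longrightarrow> Defs.inner n (weyl x \<phi>) (weyl x \<chi>) = Defs.inner n \<phi> \<chi>"
  unfolding inner_weyl_left by (rule inner_cong) (simp_all add: weyl_weyl_self)

lemma pure_state_weyl: "pure_state n \<phi> \<Longrightarrow> x \<in> weyl_index n \<Longrightarrow> pure_state n (weyl x \<phi>)"
  by (simp add: pure_state_def inner_weyl_weyl)

lemma sum_neg_one_power_bdot_bxor:
  assumes "a \<in> bits n" "u \<in> bits n" "v \<in> bits n"
  shows "(\<Sum>b\<in>bits n. (-1 :: complex) ^ bdot b (bxor u a) * (-1) ^ bdot b (bxor v a))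
    = (if u = v then 2 ^ n else 0)"
proof -
  have "(\<Sum>b\<in>bits n. (-1 :: complex) ^ bdot b (bxor u a) * (-1) ^ bdot b (bxor v a))
      = (\<Sum>b\<in>bits n. (-1) ^ bdot b (bxor u v))"
    using assms by (intro sum.cong) (auto simp: neg_one_power_bdot_bxor_right neg_one_power_mult_self)
  also have "\<dots> = (if u = v then 2 ^ n else 0)"
    using assms bxor_eq_replicate_False_iff[of u v] by (subst sum_neg_one_power_bdot) auto
  finally show ?thesis .
qed

lemma inner_weyl_mult_cnj_inner_weyl:
  "Defs.inner n \<alpha> (weyl (a, b) \<beta>) * cnj (Defs.inner n \<gamma> (weyl (a, b) \<delta>))
    = (\<Sum>u\<in>bits n. \<Sum>v\<in>bits n. cnj (\<alpha> u) * \<gamma> v * \<beta> (bxor u a) * cnj (\<delta> (bxor v a))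
        * ((-1) ^ bdot b (bxor u a) * (-1) ^ bdot b (bxor v a)))"
proof -
  have "cnj (\<i> ^ bdot a b) * \<i> ^ bdot a b = 1"
    by (simp flip: power_mult_distrib)
  then show ?thesis
    unfolding Defs.inner_def weyl_def sum_product cnj_sum
    by (intro sum.cong refl) (simp add: ac_simps)
qed

lemma weyl_completeness:
  "(\<Sum>x\<in>weyl_index n. Defs.inner n \<alpha> (weyl x \<beta>) * cnj (Defs.inner n \<gamma> (weyl x \<delta>)))
    = 2 ^ n * Defs.inner n \<alpha> \<gamma> * Defs.inner n \<delta> \<beta>"
proof -
  define G where "G a u v = cnj (\<alpha> u) * \<gamma> v * \<beta> (bxor u a) * cnj (\<delta> (bxor v a))" for a u v
  define s where "s b u v = (-1 :: complex) ^ bdot b u * (-1) ^ bdot b v" for b u v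
  have swap: "(\<Sum>b\<in>B. \<Sum>u\<in>U. \<Sum>v\<in>V. f b u v) = (\<Sum>u\<in>U. \<Sum>v\<in>V. \<Sum>b\<in>B. f b u v)"
    for f :: "_ \<Rightarrow> _ \<Rightarrow> _ \<Rightarrow> complex" and B U V
    by (subst sum.swap) (rule sum.cong[OF refl], rule sum.swap)
  have "(\<Sum>x\<in>weyl_index n. Defs.inner n \<alpha> (weyl x \<beta>) * cnj (Defs.inner n \<gamma> (weyl x \<delta>)))
      = (\<Sum>a\<in>bits n. \<Sum>b\<in>bits n. \<Sum>u\<in>bits n. \<Sum>v\<in>bits n. G a u v * s b (bxor u a) (bxor v a))"
    unfolding sum_weyl_index inner_weyl_mult_cnj_inner_weyl G_def s_def ..
  also have "\<dots> = (\<Sum>a\<in>bits n. \<Sum>u\<in>bits n. \<Sum>v\<in>bits n.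
      G a u v * (\<Sum>b\<in>bits n. s b (bxor u a) (bxor v a)))"
    by (rule sum.cong[OF refl], subst swap) (simp add: sum_distrib_left)
  also have "\<dots> = (\<Sum>a\<in>bits n. \<Sum>u\<in>bits n. \<Sum>v\<in>bits n. G a u v * (if u = v then 2 ^ n else 0))"
    by (intro sum.cong refl) (simp add: s_def sum_neg_one_power_bdot_bxor)
  also have "\<dots> = 2 ^ n * (\<Sum>a\<in>bits n. \<Sum>u\<in>bits n. G a u u)"
    by (simp add: sum_distrib_left if_distrib sum.delta mult.commute cong: if_cong)
  also have "\<dots> = 2 ^ n * (\<Sum>u\<in>bits n. cnj (\<alpha> u) * \<gamma> u * (\<Sum>a\<in>bits n. \<beta> (bxor a u) * cnj (\<delta> (bxor a u))))"
    unfolding G_def by (subst sum.swap) (simp add: sum_distrib_left bxor_commute ac_simps)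
  also have "\<dots> = 2 ^ n * (\<Sum>u\<in>bits n. cnj (\<alpha> u) * \<gamma> u * (\<Sum>a\<in>bits n. \<beta> a * cnj (\<delta> a)))"
    by (simp add: sum_bits_bxor[where g = "\<lambda>w. \<beta> w * cnj (\<delta> w)"])
  also have "\<dots> = 2 ^ n * Defs.inner n \<alpha> \<gamma> * Defs.inner n \<delta> \<beta>"
    by (simp only: flip: sum_distrib_right) (simp add: Defs.inner_def mult.commute mult.assoc)
  finally show ?thesis .
qed

definition expval :: "nat \<Rightarrow> (bool list \<Rightarrow> complex) \<Rightarrow> bool list \<times> bool list \<Rightarrow> complex" where
  "expval n \<psi> x = Defs.inner n \<psi> (weyl x \<psi>)"

definition expval_sq :: "nat \<Rightarrow> (bool list \<Rightarrow> complex) \<Rightarrow> bool list \<times> bool list \<Rightarrow> real" where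
  "expval_sq n \<psi> x = (cmod (expval n \<psi> x))\<^sup>2"

lemma char_dist_eq_expval_sq: "char_dist n \<psi> x = expval_sq n \<psi> x / 2 ^ n"
  by (simp add: char_dist_def expval_sq_def expval_def)

lemma expval_sq_nonneg: "0 \<le> expval_sq n \<psi> x"
  by (simp add: expval_sq_def)

lemma cnj_expval: "x \<in> weyl_index n \<Longrightarrow> cnj (expval n \<psi> x) = expval n \<psi> x"
  by (simp add: expval_def cnj_inner inner_weyl_left)

lemma expval_real: "x \<in> weyl_index n \<Longrightarrow> expval n \<psi> x = of_real (Re (expval n \<psi> x))"
  by (metis Reals_cnj_iff cnj_expval of_real_Re)

lemma expval_sq_eq: "x \<in> weyl_index n \<Longrightarrow> expval_sq n \<psi> x = (Re (expval n \<psi> x))\<^sup>2"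
  unfolding expval_sq_def by (subst expval_real) simp_all

lemma expval_power2: "x \<in> weyl_index n \<Longrightarrow> (expval n \<psi> x)\<^sup>2 = of_real (expval_sq n \<psi> x)"
  by (metis expval_real expval_sq_eq of_real_power)

lemma expval_mult_cnj: "expval n \<psi> x * cnj (expval n \<psi> x) = of_real (expval_sq n \<psi> x)"
  unfolding expval_sq_def by (rule complex_norm_square[symmetric])

lemma expval_weyl_zero: "expval n \<psi> (weyl_zero n) = Defs.inner n \<psi> \<psi>"
  unfolding expval_def by (rule inner_cong) (simp_all add: weyl_weyl_zero)

lemma expval_sq_le_1: "pure_state n \<psi> \<Longrightarrow> x \<in> weyl_index n \<Longrightarrow> expval_sq n \<psi> x \<le> 1"
  unfolding expval_sq_def expval_def by (intro pure_state_inner_le_1 pure_state_weyl)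

lemma sum_expval_sq:
  assumes "pure_state n \<psi>"
  shows "(\<Sum>x\<in>weyl_index n. expval_sq n \<psi> x) = 2 ^ n"
proof -
  have "(\<Sum>x\<in>weyl_index n. expval n \<psi> x * cnj (expval n \<psi> x)) = 2 ^ n"
    using weyl_completeness[of n \<psi> \<psi> \<psi> \<psi>] assms by (simp add: expval_def pure_state_def)
  then have "complex_of_real (\<Sum>x\<in>weyl_index n. expval_sq n \<psi> x) = complex_of_real (2 ^ n)"
    by (simp add: expval_mult_cnj)
  then show ?thesis
    by (simp only: of_real_eq_iff)
qed

lemma inner_weyl_conj_weyl:
  assumes x: "x \<in> weyl_index n" and y: "y \<in> weyl_index n"
  shows "Defs.inner n (weyl x \<psi>) (weyl y (weyl x \<psi>)) = (-1) ^ symp_form x y * expval n \<psi> y"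
proof -
  have "Defs.inner n (weyl x \<psi>) (weyl y (weyl x \<psi>)) = Defs.inner n \<psi> (weyl x (weyl y (weyl x \<psi>)))"
    by (rule inner_weyl_left[OF x])
  also have "\<dots> = Defs.inner n \<psi> (\<lambda>u. (-1) ^ symp_form x y * weyl y (weyl x (weyl x \<psi>)) u)"
    by (rule inner_cong) (simp_all add: weyl_commute[OF x y])
  also have "\<dots> = (-1) ^ symp_form x y * Defs.inner n \<psi> (weyl y (weyl x (weyl x \<psi>)))"
    by (rule inner_cmult_right)
  also have "Defs.inner n \<psi> (weyl y (weyl x (weyl x \<psi>))) = expval n \<psi> y"
    unfolding expval_def using x y by (intro inner_cong weyl_cong) (simp_all add: weyl_weyl_self)
  finally show ?thesis .
qed

text \<open>Apply the completeness relation to the states \<open>W\<^sub>x \<psi>\<close> and \<open>\<psi>\<close>.\<close>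

lemma symplectic_fourier_expval_sq:
  assumes "pure_state n \<psi>" and x: "x \<in> weyl_index n"
  shows "(\<Sum>y\<in>weyl_index n. (-1 :: real) ^ symp_form x y * expval_sq n \<psi> y) = 2 ^ n * expval_sq n \<psi> x"
proof -
  have "(\<Sum>y\<in>weyl_index n. (-1) ^ symp_form x y * (expval n \<psi> y * cnj (expval n \<psi> y)))
      = (\<Sum>y\<in>weyl_index n. Defs.inner n (weyl x \<psi>) (weyl y (weyl x \<psi>)) * cnj (Defs.inner n \<psi> (weyl y \<psi>)))"
    using x by (intro sum.cong refl) (simp add: inner_weyl_conj_weyl expval_def)
  also have "\<dots> = 2 ^ n * (expval n \<psi> x * cnj (expval n \<psi> x))"
    using weyl_completeness[of n "weyl x \<psi>" "weyl x \<psi>" \<psi> \<psi>]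
    by (simp add: expval_def cnj_inner ac_simps)
  finally have "complex_of_real (\<Sum>y\<in>weyl_index n. (-1) ^ symp_form x y * expval_sq n \<psi> y)
      = complex_of_real (2 ^ n * expval_sq n \<psi> x)"
    by (simp add: expval_mult_cnj)
  then show ?thesis
    by (simp only: of_real_eq_iff)
qed

section \<open>The quantity \<open>\<eta>\<close> and the heavy Weyl operators\<close>

lemma expval_sq_padd:
  assumes "pure_state n \<psi>" and x: "x \<in> weyl_index n" and y: "y \<in> weyl_index n"
  shows "expval_sq n \<psi> (padd x y)
    = (\<Sum>z\<in>weyl_index n. (-1 :: real) ^ symp_form x z * (-1) ^ symp_form y z * expval_sq n \<psi> z) / 2 ^ n"
proof -
  have "(\<Sum>z\<in>weyl_index n. (-1 :: real) ^ symp_form x z * (-1) ^ symp_form y z * expval_sq n \<psi> z)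
      = (\<Sum>z\<in>weyl_index n. (-1) ^ symp_form (padd x y) z * expval_sq n \<psi> z)"
    using x y by (intro sum.cong refl) (simp add: neg_one_power_symp_padd_left)
  also have "\<dots> = 2 ^ n * expval_sq n \<psi> (padd x y)"
    using assms by (simp add: symplectic_fourier_expval_sq)
  finally show ?thesis
    by simp
qed

lemma sum_expval_sq_triples:
  assumes "pure_state n \<psi>"
  shows "(\<Sum>x\<in>weyl_index n. \<Sum>y\<in>weyl_index n.
      expval_sq n \<psi> x * expval_sq n \<psi> y * expval_sq n \<psi> (padd x y))
    = 2 ^ n * (\<Sum>z\<in>weyl_index n. expval_sq n \<psi> z ^ 3)"
proof -
  let ?V = "weyl_index n" and ?f = "expval_sq n \<psi>"
  let ?g = "\<lambda>x y z. ?f x * ?f y * ?f z * ((-1 :: real) ^ symp_form x z * (-1) ^ symp_form y z) / 2 ^ n"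
  have "(\<Sum>x\<in>?V. \<Sum>y\<in>?V. ?f x * ?f y * ?f (padd x y)) = (\<Sum>x\<in>?V. \<Sum>y\<in>?V. \<Sum>z\<in>?V. ?g x y z)"
    by (intro sum.cong refl)
      (simp add: expval_sq_padd[OF assms] sum_distrib_left sum_divide_distrib ac_simps)
  also have "\<dots> = (\<Sum>z\<in>?V. \<Sum>x\<in>?V. \<Sum>y\<in>?V. ?g x y z)"
    by (subst sum.swap, rule sum.cong[OF refl], rule sum.swap)
  also have "\<dots> = (\<Sum>z\<in>?V. ?f z * (\<Sum>x\<in>?V. (-1) ^ symp_form z x * ?f x)
      * (\<Sum>y\<in>?V. (-1) ^ symp_form z y * ?f y) / 2 ^ n)"
    by (intro sum.cong refl)
      (simp add: sum_product sum_divide_distrib sum_distrib_left symp_form_commute ac_simps)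
  also have "\<dots> = (\<Sum>z\<in>?V. ?f z * (2 ^ n * ?f z) * (2 ^ n * ?f z) / 2 ^ n)"
    by (intro sum.cong refl) (simp add: symplectic_fourier_expval_sq[OF assms])
  also have "\<dots> = 2 ^ n * (\<Sum>z\<in>?V. ?f z ^ 3)"
    by (simp add: sum_distrib_left power3_eq_cube ac_simps)
  finally show ?thesis .
qed

lemma eta_eq_sum_cubes:
  assumes "pure_state n \<psi>"
  shows "eta n \<psi> = (\<Sum>x\<in>weyl_index n. expval_sq n \<psi> x ^ 3) / 2 ^ n"
proof -
  let ?V = "weyl_index n" and ?f = "expval_sq n \<psi>"
  have "eta n \<psi> = (\<Sum>x\<in>?V. \<Sum>y\<in>?V. ?f x * ?f y * ?f (padd x y)) / (2 ^ n * 2 ^ n)"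
    unfolding eta_def conv_dist_def char_dist_eq_expval_sq
    by (simp add: sum_divide_distrib sum_distrib_left sum_distrib_right ac_simps)
  then show ?thesis
    by (simp add: sum_expval_sq_triples[OF assms])
qed

definition heavy_set :: "nat \<Rightarrow> (bool list \<Rightarrow> complex) \<Rightarrow> (bool list \<times> bool list) set" where
  "heavy_set n \<psi> = {x \<in> weyl_index n. expval_sq n \<psi> x > 1 / 2}"

lemma cube_le_split:
  assumes "0 \<le> t" "t \<le> (1 :: real)"
  shows "t ^ 3 \<le> t / 4 + (if t > 1 / 2 then 3 / 4 * t else 0)"
proof (cases "t > 1 / 2")
  case True
  have "t * t \<le> 1"
    using assms by (simp add: mult_le_one)
  then show ?thesis
    using True assms mult_left_le[of "t * t" t] by (simp add: power3_eq_cube ac_simps)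
next
  case False
  then have "t * t \<le> 1 / 4"
    using assms mult_mono[of t "1 / 2" t "1 / 2"] by simp
  then show ?thesis
    using False assms mult_left_mono[of "t * t" "1 / 4" t] by (simp add: power3_eq_cube ac_simps)
qed

lemma eta_le_heavy_set:
  assumes "pure_state n \<psi>"
  shows "eta n \<psi> \<le> 1 / 4 + 3 / 4 * ((\<Sum>x\<in>heavy_set n \<psi>. expval_sq n \<psi> x) / 2 ^ n)"
proof -
  let ?V = "weyl_index n" and ?f = "expval_sq n \<psi>"
  have "(\<Sum>x\<in>?V. ?f x ^ 3) \<le> (\<Sum>x\<in>?V. ?f x / 4 + (if ?f x > 1 / 2 then 3 / 4 * ?f x else 0))"
    using assms by (intro sum_mono cube_le_split expval_sq_nonneg expval_sq_le_1)
  also have "\<dots> = (\<Sum>x\<in>?V. ?f x) / 4 + 3 / 4 * (\<Sum>x\<in>heavy_set n \<psi>. ?f x)"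
    by (simp add: heavy_set_def sum.distrib sum_divide_distrib sum_distrib_left
        flip: sum.inter_filter)
  finally show ?thesis
    using assms by (simp add: eta_eq_sum_cubes sum_expval_sq field_simps)
qed

text \<open>For anticommuting \<open>W\<^sub>x, W\<^sub>y\<close> and \<open>a = \<langle>W\<^sub>x\<rangle>, b = \<langle>W\<^sub>y\<rangle>\<close>, the cross terms of
  \<open>\<chi> = a W\<^sub>x \<psi> + b W\<^sub>y \<psi>\<close> cancel, so \<open>\<parallel>\<chi>\<parallel>\<^sup>2 = \<langle>\<psi>, \<chi>\<rangle> = a\<^sup>2 + b\<^sup>2\<close>
  and Cauchy-Schwarz gives \<open>a\<^sup>2 + b\<^sup>2 \<le> 1\<close>.\<close>

lemma expval_sq_add_le_1_if_anticommuting: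
  assumes pure: "pure_state n \<psi>" and x: "x \<in> weyl_index n" and y: "y \<in> weyl_index n"
    and anti: "\<not> commuting x y"
  shows "expval_sq n \<psi> x + expval_sq n \<psi> y \<le> 1"
proof -
  define a where "a = Re (expval n \<psi> x)"
  define b where "b = Re (expval n \<psi> y)"
  define \<chi> where "\<chi> = (\<lambda>v. of_real a * weyl x \<psi> v + of_real b * weyl y \<psi> v)"
  define K where "K = Defs.inner n (weyl x \<psi>) (weyl y \<psi>)"
  have "Defs.inner n (weyl y \<psi>) (weyl x \<psi>) = Defs.inner n \<psi> (weyl y (weyl x \<psi>))"
    by (rule inner_weyl_left[OF y])
  also have "\<dots> = Defs.inner n \<psi> (\<lambda>u. - weyl x (weyl y \<psi>) u)"
    using anti by (intro inner_cong) (simp_all add: weyl_commute[OF y x] neg_one_power_symp commuting_commute)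
  also have "\<dots> = - K"
    using inner_cmult_right[of n \<psi> "-1"] by (simp add: K_def inner_weyl_left[OF x])
  finally have anticomm: "Defs.inner n (weyl y \<psi>) (weyl x \<psi>) = - K" .
  have unit: "Defs.inner n (weyl x \<psi>) (weyl x \<psi>) = 1" "Defs.inner n (weyl y \<psi>) (weyl y \<psi>) = 1"
    using pure x y by (simp_all add: pure_state_def inner_weyl_weyl)
  have "Defs.inner n \<chi> \<chi> = of_real (a\<^sup>2 + b\<^sup>2)"
    unfolding \<chi>_def inner_add_right inner_add_left inner_cmult_right inner_cmult_left
      anticomm unit K_def[symmetric]
    by (simp add: power2_eq_square algebra_simps)
  then have norm_\<chi>: "(\<Sum>v\<in>bits n. (cmod (\<chi> v))\<^sup>2) = a\<^sup>2 + b\<^sup>2"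
    by (simp only: inner_self of_real_eq_iff)
  have "Defs.inner n \<psi> \<chi> = of_real (a\<^sup>2 + b\<^sup>2)"
    unfolding \<chi>_def inner_add_right inner_cmult_right expval_def[symmetric] a_def b_def
    using expval_real[OF x] expval_real[OF y] by (simp add: power2_eq_square)
  then have "(cmod (Defs.inner n \<psi> \<chi>))\<^sup>2 = (a\<^sup>2 + b\<^sup>2)\<^sup>2"
    by (simp only: norm_of_real power2_abs)
  then have "(a\<^sup>2 + b\<^sup>2)\<^sup>2 \<le> a\<^sup>2 + b\<^sup>2"
    using inner_cauchy_schwarz[of n \<psi> \<chi>] norm_\<chi> pure_state_norm[OF pure] by simp
  then have "a\<^sup>2 + b\<^sup>2 \<le> 1"
    using mult_le_cancel_left2[of "a\<^sup>2 + b\<^sup>2" "a\<^sup>2 + b\<^sup>2"]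
    by (cases "a\<^sup>2 + b\<^sup>2 = 0") (auto simp: power2_eq_square[of "a\<^sup>2 + b\<^sup>2"])
  then show ?thesis
    by (simp add: expval_sq_eq[OF x] expval_sq_eq[OF y] a_def b_def)
qed

lemma heavy_set_commuting:
  "pure_state n \<psi> \<Longrightarrow> x \<in> heavy_set n \<psi> \<Longrightarrow> y \<in> heavy_set n \<psi> \<Longrightarrow> commuting x y"
  using expval_sq_add_le_1_if_anticommuting[of n \<psi> x y] by (force simp: heavy_set_def)

section \<open>Stabilizer groups\<close>

text \<open>\<open>stabilizer_group n S s\<close>: the signed Weyl operators \<open>s x \<cdot> W\<^sub>x\<close>, \<open>x \<in> S\<close>, form an abelian
  group under operator multiplication; the phases of \<open>weyl_mult\<close> are absorbed by the signs.\<close>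

definition stabilizer_group ::
    "nat \<Rightarrow> (bool list \<times> bool list) set \<Rightarrow> (bool list \<times> bool list \<Rightarrow> complex) \<Rightarrow> bool" where
  "stabilizer_group n S s \<longleftrightarrow> S \<subseteq> weyl_index n \<and> weyl_zero n \<in> S \<and>
     (\<forall>x\<in>S. \<forall>y\<in>S. padd x y \<in> S \<and> commuting x y \<and> s x * s y * weyl_phase x y = s (padd x y)) \<and>
     (\<forall>x\<in>S. s x \<in> {1, -1})"

definition symp_perp :: "nat \<Rightarrow> (bool list \<times> bool list) set \<Rightarrow> (bool list \<times> bool list) set" where
  "symp_perp n T = {z \<in> weyl_index n. \<forall>t\<in>T. commuting z t}"

context
  fixes n :: nat and T :: "(bool list \<times> bool list) set" and s :: "bool list \<times> bool list \<Rightarrow> complex"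
  assumes T: "stabilizer_group n T s"
begin

lemma stabilizer_group_weyl_index: "x \<in> T \<Longrightarrow> x \<in> weyl_index n"
  using T by (auto simp: stabilizer_group_def)

lemma stabilizer_group_finite: "finite T"
  using T finite_subset[of T "weyl_index n"] by (auto simp: stabilizer_group_def)

lemma stabilizer_group_weyl_zero: "weyl_zero n \<in> T"
  using T by (simp add: stabilizer_group_def)

lemma stabilizer_group_padd: "x \<in> T \<Longrightarrow> y \<in> T \<Longrightarrow> padd x y \<in> T"
  using T by (simp add: stabilizer_group_def)

lemma stabilizer_group_commuting: "x \<in> T \<Longrightarrow> y \<in> T \<Longrightarrow> commuting x y"
  using T by (simp add: stabilizer_group_def)

lemma stabilizer_group_sign_mult: "x \<in> T \<Longrightarrow> y \<in> T \<Longrightarrow> s x * s y * weyl_phase x y = s (padd x y)"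
  using T by (simp add: stabilizer_group_def)

lemma stabilizer_group_sign: "x \<in> T \<Longrightarrow> s x = 1 \<or> s x = -1"
  using T by (simp add: stabilizer_group_def)

lemma stabilizer_group_sign_weyl_zero: "s (weyl_zero n) = 1"
proof -
  have "padd (weyl_zero n) (weyl_zero n) = weyl_zero n" "weyl_phase (weyl_zero n) (weyl_zero n) = 1"
    by (simp_all add: padd_self weyl_phase_self[of _ n])
  then show ?thesis
    using stabilizer_group_sign_mult[OF stabilizer_group_weyl_zero stabilizer_group_weyl_zero]
      stabilizer_group_sign[OF stabilizer_group_weyl_zero]
    by auto
qed

lemma stabilizer_group_card_le: "card T \<le> 4 ^ n"
  using T card_mono[OF finite_weyl_index] by (simp add: stabilizer_group_def card_weyl_index)

lemma stabilizer_group_card_pos: "0 < card T"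
  using stabilizer_group_weyl_zero stabilizer_group_finite by (auto simp: card_gt_0_iff)

lemma stabilizer_group_subset_symp_perp: "T \<subseteq> symp_perp n T"
  by (auto simp: symp_perp_def stabilizer_group_weyl_index stabilizer_group_commuting)

lemma sum_stabilizer_group_padd:
  assumes "t0 \<in> T"
  shows "(\<Sum>t\<in>T. g (padd t0 t)) = (\<Sum>t\<in>T. g t)"
proof -
  have "padd t0 (padd t0 t) = t" if "t \<in> T" for t
    using assms that by (simp add: padd_cancel_left[of _ n] stabilizer_group_weyl_index)
  then have "bij_betw (padd t0) T T"
    using assms by (intro bij_betw_byWitness[where f' = "padd t0"]) (auto simp: stabilizer_group_padd)
  then show ?thesis
    by (rule sum.reindex_bij_betw)
qed

lemma sum_neg_one_power_symp_stabilizer_group: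
  assumes z: "z \<in> weyl_index n"
  shows "(\<Sum>t\<in>T. (-1 :: complex) ^ symp_form z t) = (if z \<in> symp_perp n T then of_nat (card T) else 0)"
proof (cases "z \<in> symp_perp n T")
  case True
  then show ?thesis
    by (simp add: symp_perp_def neg_one_power_symp)
next
  case False
  then obtain t0 where t0: "t0 \<in> T" "\<not> commuting z t0"
    using z by (auto simp: symp_perp_def)
  have "(\<Sum>t\<in>T. (-1 :: complex) ^ symp_form z t) = (\<Sum>t\<in>T. (-1) ^ symp_form z (padd t0 t))"
    using t0(1) by (rule sum_stabilizer_group_padd[symmetric])
  also have "\<dots> = - (\<Sum>t\<in>T. (-1) ^ symp_form z t)"
    using t0 z by (simp add: neg_one_power_symp_padd_right[where n = n] stabilizer_group_weyl_index
        neg_one_power_symp[of z t0] sum_negf)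
  finally show ?thesis
    using False by simp
qed

text \<open>Double counting of \<open>\<Sum>\<^sub>z \<Sum>\<^sub>t\<^sub>\<in>\<^sub>T (-1)\<^bsup>symp_form z t\<^esup>\<close>.\<close>

lemma card_mult_card_symp_perp: "card T * card (symp_perp n T) = 4 ^ n"
proof -
  have "of_nat (card T * card (symp_perp n T))
      = (\<Sum>z\<in>weyl_index n. if z \<in> symp_perp n T then of_nat (card T) else (0 :: complex))"
    by (simp add: symp_perp_def flip: sum.inter_filter)
  also have "\<dots> = (\<Sum>z\<in>weyl_index n. \<Sum>t\<in>T. (-1) ^ symp_form z t)"
    by (simp add: sum_neg_one_power_symp_stabilizer_group)
  also have "\<dots> = (\<Sum>t\<in>T. \<Sum>z\<in>weyl_index n. (-1) ^ symp_form z t)"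
    by (rule sum.swap)
  also have "\<dots> = (\<Sum>t\<in>T. if t = weyl_zero n then 4 ^ n else 0)"
    by (simp add: sum_neg_one_power_symp stabilizer_group_weyl_index)
  also have "\<dots> = of_nat (4 ^ n)"
    by (simp add: stabilizer_group_finite stabilizer_group_weyl_zero)
  finally show ?thesis
    by (simp only: of_nat_eq_iff)
qed

end

lemma stabilizer_group_pair:
  assumes "z \<in> weyl_index n"
  shows "stabilizer_group n {weyl_zero n, z} (\<lambda>_. 1)"
  using assms
  by (auto simp: stabilizer_group_def padd_self padd_weyl_zero_left padd_weyl_zero_right
      commuting_self weyl_phase_self weyl_phase_weyl_zero_left weyl_phase_weyl_zero_right)

lemma stabilizer_group_product:
  assumes E: "stabilizer_group n E r" and T: "stabilizer_group n T s"
    and comm: "\<And>e t. e \<in> E \<Longrightarrow> t \<in> T \<Longrightarrow> commuting e t"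
    and \<sigma>: "\<And>e t. e \<in> E \<Longrightarrow> t \<in> T \<Longrightarrow> \<sigma> (padd e t) = r e * s t * weyl_phase e t"
  shows "stabilizer_group n {padd e t |e t. e \<in> E \<and> t \<in> T} \<sigma>"
proof -
  note EV = stabilizer_group_weyl_index[OF E] and TV = stabilizer_group_weyl_index[OF T]
  have closed: "padd x y \<in> {padd e t |e t. e \<in> E \<and> t \<in> T} \<and> commuting x y \<and>
      \<sigma> x * \<sigma> y * weyl_phase x y = \<sigma> (padd x y)"
    if x: "x = padd e t" "e \<in> E" "t \<in> T" and y: "y = padd e' u" "e' \<in> E" "u \<in> T" for x y e t e' u
  proof (intro conjI)
    have xy: "padd x y = padd (padd e e') (padd t u)"
      using x y by (metis padd_assoc padd_left_commute)
    then show "padd x y \<in> {padd e t |e t. e \<in> E \<and> t \<in> T}"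
      using x y stabilizer_group_padd[OF E, of e e'] stabilizer_group_padd[OF T, of t u] by blast
    show "commuting x y"
      using x y comm[of e u] comm[of e' t] stabilizer_group_commuting[OF E, of e e']
        stabilizer_group_commuting[OF T, of t u]
      by (simp add: EV TV commuting_padd_left[where n = n] commuting_padd_right[where n = n]
          commuting_commute[of t e'])
    have "\<sigma> x * \<sigma> y * weyl_phase x y
        = (r e * r e' * weyl_phase e e') * (s t * s u * weyl_phase t u) * weyl_phase (padd e e') (padd t u)"
      using x y weyl_phase_interchange[OF EV TV EV TV, of e t e' u] comm[of e' t]
      by (simp add: \<sigma> commuting_commute ac_simps)
    also have "\<dots> = \<sigma> (padd x y)"
      unfolding xy using x y by (simp add: \<sigma> stabilizer_group_padd[OF E] stabilizer_group_padd[OF T]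
          stabilizer_group_sign_mult[OF E] stabilizer_group_sign_mult[OF T])
    finally show "\<sigma> x * \<sigma> y * weyl_phase x y = \<sigma> (padd x y)" .
  qed
  have sign: "\<sigma> (padd e t) \<in> {1, -1}" if "e \<in> E" "t \<in> T" for e t
    using \<sigma>[OF that] stabilizer_group_sign[OF E that(1)] stabilizer_group_sign[OF T that(2)]
      weyl_phase_commuting_sign[OF EV[OF that(1)] TV[OF that(2)] comm[OF that]]
    by auto
  have "weyl_zero n = padd (weyl_zero n) (weyl_zero n)"
    by (simp add: padd_self[of _ n])
  then have "weyl_zero n \<in> {padd e t |e t. e \<in> E \<and> t \<in> T}"
    using stabilizer_group_weyl_zero[OF E] stabilizer_group_weyl_zero[OF T] by blast
  moreover have "{padd e t |e t. e \<in> E \<and> t \<in> T} \<subseteq> weyl_index n"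
    using EV TV by (auto intro: padd_in_weyl_index)
  ultimately show ?thesis
    unfolding stabilizer_group_def using closed sign by blast
qed

lemma stabilizer_group_extend:
  assumes T: "stabilizer_group n T s" and z: "z \<in> symp_perp n T" "z \<notin> T"
  shows "\<exists>s'. stabilizer_group n (T \<union> padd z ` T) s' \<and> card (T \<union> padd z ` T) = 2 * card T"
proof -
  note TV = stabilizer_group_weyl_index[OF T]
  have zV: "z \<in> weyl_index n"
    using z by (simp add: symp_perp_def)
  have notin: "padd z t \<notin> T" if "t \<in> T" for t
    using z(2) stabilizer_group_padd[OF T _ that] padd_cancel_left[OF TV[OF that] zV]
    by (metis padd_commute padd_left_commute)
  define s' where "s' x = (if x \<in> T then s x else weyl_phase z (padd z x) * s (padd z x))" for x
  have s': "s' (padd e t) = 1 * s t * weyl_phase e t" if "e \<in> {weyl_zero n, z}" "t \<in> T" for e t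
    using that notin[OF that(2)]
    by (auto simp: s'_def padd_weyl_zero_left TV weyl_phase_weyl_zero_left padd_cancel_left[OF zV])
  have comm: "commuting e t" if "e \<in> {weyl_zero n, z}" "t \<in> T" for e t
    using that z by (auto simp: symp_perp_def)
  have "{padd e t |e t. e \<in> {weyl_zero n, z} \<and> t \<in> T} = T \<union> padd z ` T"
  proof (intro equalityI subsetI)
    fix x
    assume "x \<in> T \<union> padd z ` T"
    moreover have "x = padd (weyl_zero n) x" if "x \<in> T"
      using that by (simp add: padd_weyl_zero_left TV)
    ultimately show "x \<in> {padd e t |e t. e \<in> {weyl_zero n, z} \<and> t \<in> T}"
      by blast
  qed (auto simp: padd_weyl_zero_left TV)
  then have "stabilizer_group n (T \<union> padd z ` T) s'"
    using stabilizer_group_product[OF stabilizer_group_pair[OF zV] T comm s'] by simp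
  moreover have "card (T \<union> padd z ` T) = 2 * card T"
  proof -
    have "inj_on (padd z) T"
      by (rule inj_on_inverseI[where g = "padd z"]) (simp add: padd_cancel_left[OF zV] TV)
    moreover have "T \<inter> padd z ` T = {}"
      using notin by blast
    ultimately show ?thesis
      using stabilizer_group_finite[OF T] by (simp add: card_Un_disjoint card_image)
  qed
  ultimately show ?thesis
    by blast
qed

lemma stabilizer_group_card_eq_if_symp_perp_subset:
  assumes T: "stabilizer_group n T s" and "symp_perp n T \<subseteq> T"
  shows "card T = 2 ^ n"
proof -
  have "symp_perp n T = T"
    using assms stabilizer_group_subset_symp_perp[OF T] by blast
  then have "card T * card T = 2 ^ n * 2 ^ n"
    using card_mult_card_symp_perp[OF T] by (simp flip: power_mult_distrib)
  then show ?thesis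
    by (metis power2_eq_square power2_eq_imp_eq zero_le)
qed

text \<open>Prefer an element of \<open>A\<close>; if \<open>A \<subseteq> T\<close>, any element of \<open>symp_perp n T - T\<close>
  commutes with \<open>A\<close>.\<close>

lemma symp_perp_extension_element:
  assumes T: "stabilizer_group n T s" and A: "A \<subseteq> symp_perp n T"
    and comm: "\<And>a b. a \<in> A \<Longrightarrow> b \<in> A \<Longrightarrow> commuting a b" and "\<not> symp_perp n T \<subseteq> T"
  obtains z where "z \<in> symp_perp n T" "z \<notin> T" "\<And>a. a \<in> A \<Longrightarrow> commuting a z"
proof (cases "A \<subseteq> T")
  case True
  from \<open>\<not> symp_perp n T \<subseteq> T\<close> obtain z where z: "z \<in> symp_perp n T" "z \<notin> T"
    by blast
  moreover have "commuting a z" if "a \<in> A" for a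
    using True that z(1) by (auto simp: symp_perp_def commuting_commute)
  ultimately show ?thesis
    using that by blast
next
  case False
  then show ?thesis
    using that A comm by blast
qed

lemma stabilizer_group_maximal_extension:
  assumes "stabilizer_group n T s" and "A \<subseteq> symp_perp n T"
    and comm: "\<And>a b. a \<in> A \<Longrightarrow> b \<in> A \<Longrightarrow> commuting a b"
  shows "\<exists>S s. stabilizer_group n S s \<and> A \<subseteq> S \<and> card S = 2 ^ n"
  using assms(1,2)
proof (induction "4 ^ n - card T" arbitrary: T s rule: less_induct)
  case less
  note T = less.prems(1)
  show ?case
  proof (cases "symp_perp n T \<subseteq> T")
    case True
    then show ?thesis
      using T less.prems(2) stabilizer_group_card_eq_if_symp_perp_subset by blast
  next
    case False
    then obtain z where z: "z \<in> symp_perp n T" "z \<notin> T" and zA: "\<And>a. a \<in> A \<Longrightarrow> commuting a z"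
      using symp_perp_extension_element[OF T less.prems(2) comm] by blast
    obtain s' where T': "stabilizer_group n (T \<union> padd z ` T) s'"
      and card: "card (T \<union> padd z ` T) = 2 * card T"
      using stabilizer_group_extend[OF T z] by blast
    have "A \<subseteq> symp_perp n (T \<union> padd z ` T)"
      using less.prems(2) zA z(1)
      by (auto simp: symp_perp_def commuting_padd_right[where n = n] stabilizer_group_weyl_index[OF T])
    moreover have "4 ^ n - card (T \<union> padd z ` T) < 4 ^ n - card T"
      using card stabilizer_group_card_le[OF T'] stabilizer_group_card_pos[OF T] by linarith
    ultimately show ?thesis
      using less.hyps T' by blast
  qed
qed

lemma maximal_stabilizer_group_containing:
  assumes "A \<subseteq> weyl_index n" and "\<And>a b. a \<in> A \<Longrightarrow> b \<in> A \<Longrightarrow> commuting a b"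
  shows "\<exists>S s. stabilizer_group n S s \<and> A \<subseteq> S \<and> card S = 2 ^ n"
  using stabilizer_group_maximal_extension[OF stabilizer_group_pair[of "weyl_zero n" n]] assms
  by (auto simp: symp_perp_def)

section \<open>Stabilizer projectors and the fidelity bound\<close>

definition stabilizer_proj ::
    "nat \<Rightarrow> (bool list \<times> bool list) set \<Rightarrow> (bool list \<times> bool list \<Rightarrow> complex)
      \<Rightarrow> (bool list \<Rightarrow> complex) \<Rightarrow> (bool list \<Rightarrow> complex)" where
  "stabilizer_proj n S s \<phi> = (\<lambda>v. \<Sum>x\<in>S. s x / 2 ^ n * weyl x \<phi> v)"

lemma inner_stabilizer_proj_eq_sum_expval:
  "Defs.inner n \<psi> (stabilizer_proj n S s \<psi>) = (\<Sum>x\<in>S. s x / 2 ^ n * expval n \<psi> x)"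
  unfolding stabilizer_proj_def inner_sum_right inner_cmult_right expval_def ..

context
  fixes n :: nat and S :: "(bool list \<times> bool list) set" and s :: "bool list \<times> bool list \<Rightarrow> complex"
  assumes S: "stabilizer_group n S s"
begin

lemma stabilizer_proj_stabilized:
  assumes y: "y \<in> S" and u: "u \<in> bits n"
  shows "s y * weyl y (stabilizer_proj n S s \<phi>) u = stabilizer_proj n S s \<phi> u"
proof -
  have "s y * weyl y (stabilizer_proj n S s \<phi>) u = (\<Sum>x\<in>S. s y * s x / 2 ^ n * weyl y (weyl x \<phi>) u)"
    unfolding stabilizer_proj_def weyl_sum weyl_cmult sum_distrib_left by (simp add: ac_simps)
  also have "\<dots> = (\<Sum>x\<in>S. (s y * s x * weyl_phase y x) / 2 ^ n * weyl (padd y x) \<phi> u)"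
    using y u by (intro sum.cong refl) (simp add: weyl_mult[of y n] stabilizer_group_weyl_index[OF S])
  also have "\<dots> = (\<Sum>x\<in>S. s (padd y x) / 2 ^ n * weyl (padd y x) \<phi> u)"
    using y by (simp add: stabilizer_group_sign_mult[OF S])
  also have "\<dots> = stabilizer_proj n S s \<phi> u"
    unfolding stabilizer_proj_def using y by (rule sum_stabilizer_group_padd[OF S])
  finally show ?thesis .
qed

lemma stabilizer_proj_idem:
  assumes "card S = 2 ^ n" and u: "u \<in> bits n"
  shows "stabilizer_proj n S s (stabilizer_proj n S s \<phi>) u = stabilizer_proj n S s \<phi> u"
proof -
  have "stabilizer_proj n S s (stabilizer_proj n S s \<phi>) u
      = (\<Sum>y\<in>S. s y * weyl y (stabilizer_proj n S s \<phi>) u / 2 ^ n)"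
    by (simp add: stabilizer_proj_def[of n S s "stabilizer_proj n S s \<phi>"] ac_simps)
  also have "\<dots> = (\<Sum>y\<in>S. stabilizer_proj n S s \<phi> u / 2 ^ n)"
    using u by (simp add: stabilizer_proj_stabilized)
  finally show ?thesis
    using assms by simp
qed

lemma inner_stabilizer_proj_left:
  "Defs.inner n (stabilizer_proj n S s \<phi>) \<chi> = Defs.inner n \<phi> (stabilizer_proj n S s \<chi>)"
proof -
  have "cnj (s x) = s x" if "x \<in> S" for x
    using stabilizer_group_sign[OF S that] by auto
  then show ?thesis
    unfolding stabilizer_proj_def inner_sum_left inner_sum_right inner_cmult_left inner_cmult_right
    by (intro sum.cong refl) (simp add: inner_weyl_left stabilizer_group_weyl_index[OF S])
qed

lemma inner_stabilizer_proj_self: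
  assumes "card S = 2 ^ n"
  shows "Defs.inner n \<psi> (stabilizer_proj n S s \<psi>)
    = Defs.inner n (stabilizer_proj n S s \<psi>) (stabilizer_proj n S s \<psi>)"
  unfolding inner_stabilizer_proj_left
  by (rule inner_cong) (simp_all add: stabilizer_proj_idem[OF assms])

lemma stabilizer_state_of_stabilizer_proj:
  assumes card: "card S = 2 ^ n"
    and r: "Defs.inner n \<psi> (stabilizer_proj n S s \<psi>) = of_real r" and r_pos: "0 < r"
  shows "\<exists>\<phi>. stabilizer_state n \<phi> \<and> (cmod (Defs.inner n \<phi> \<psi>))\<^sup>2 = r"
proof -
  define k where "k = complex_of_real (1 / sqrt r)"
  define \<phi> where "\<phi> = (\<lambda>v. k * stabilizer_proj n S s \<psi> v)"
  have "1 / sqrt r * (1 / sqrt r) = 1 / r"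
    using r_pos by (simp add: field_simps)
  then have "cnj k * k = of_real (1 / r)"
    unfolding k_def complex_cnj_complex_of_real by (simp only: flip: of_real_mult)
  then have "pure_state n \<phi>"
    using r r_pos unfolding pure_state_def \<phi>_def inner_cmult_left inner_cmult_right
    by (simp add: inner_stabilizer_proj_self[OF card, symmetric] mult.assoc[symmetric])
  moreover have "\<exists>\<epsilon>\<in>{1, -1}. \<forall>y\<in>bits n. \<epsilon> * weyl x \<phi> y = \<phi> y" if "x \<in> S" for x
  proof (intro bexI[of _ "s x"] ballI)
    show "s x * weyl x \<phi> y = \<phi> y" if "y \<in> bits n" for y
      unfolding \<phi>_def weyl_cmult using stabilizer_proj_stabilized[OF \<open>x \<in> S\<close> that, of \<psi>]
      by (metis mult.left_commute)
    show "s x \<in> {1, -1}"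
      using stabilizer_group_sign[OF S \<open>x \<in> S\<close>] by simp
  qed
  moreover have "S \<subseteq> weyl_index n"
    using S by (simp add: stabilizer_group_def)
  ultimately have "stabilizer_state n \<phi>"
    unfolding stabilizer_state_def using card by blast
  moreover have "Defs.inner n \<phi> \<psi> = of_real (r / sqrt r)"
    unfolding \<phi>_def inner_cmult_left inner_stabilizer_proj_left r by (simp add: k_def)
  then have "(cmod (Defs.inner n \<phi> \<psi>))\<^sup>2 = (r / sqrt r)\<^sup>2"
    by (simp only: norm_of_real power2_abs)
  then have "(cmod (Defs.inner n \<phi> \<psi>))\<^sup>2 = r"
    using r_pos by (simp add: power_divide power2_eq_square)
  ultimately show ?thesis
    by blast
qed

end

text \<open>Twisting the signs of a maximal stabilizer group by the characters
  \<open>x \<mapsto> (-1)\<^bsup>symp_form z x\<^esup>\<close> runs through all its common eigenspaces, each one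
  \<open>2\<^sup>n\<close> times as \<open>z\<close> ranges over \<open>weyl_index n\<close>.\<close>

lemma stabilizer_group_twist:
  assumes S: "stabilizer_group n S s" and z: "z \<in> weyl_index n"
  shows "stabilizer_group n S (\<lambda>x. s x * (-1) ^ symp_form z x)"
proof -
  let ?\<epsilon> = "\<lambda>x. (-1 :: complex) ^ symp_form z x"
  have "s x * ?\<epsilon> x * (s y * ?\<epsilon> y) * weyl_phase x y = s (padd x y) * ?\<epsilon> (padd x y)"
    if "x \<in> S" "y \<in> S" for x y
  proof -
    have "?\<epsilon> (padd x y) = ?\<epsilon> x * ?\<epsilon> y"
      using that z by (simp add: neg_one_power_symp_padd_right[where n = n] stabilizer_group_weyl_index[OF S])
    then show ?thesis
      using stabilizer_group_sign_mult[OF S that] by (simp add: ac_simps)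
  qed
  moreover have "s x * ?\<epsilon> x \<in> {1, -1}" if "x \<in> S" for x
    using stabilizer_group_sign[OF S that] by (auto simp: neg_one_power_symp)
  ultimately show ?thesis
    using S unfolding stabilizer_group_def by blast
qed

lemma sum_inner_twisted_stabilizer_proj:
  assumes pure: "pure_state n \<psi>" and S: "stabilizer_group n S s"
  shows "(\<Sum>z\<in>weyl_index n. Defs.inner n \<psi> (stabilizer_proj n S (\<lambda>x. s x * (-1) ^ symp_form z x) \<psi>))
    = 2 ^ n"
proof -
  let ?c = "\<lambda>x. s x * expval n \<psi> x / 2 ^ n"
  have "(\<Sum>z\<in>weyl_index n. Defs.inner n \<psi> (stabilizer_proj n S (\<lambda>x. s x * (-1) ^ symp_form z x) \<psi>))
      = (\<Sum>z\<in>weyl_index n. \<Sum>x\<in>S. ?c x * (-1) ^ symp_form z x)"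
    unfolding inner_stabilizer_proj_eq_sum_expval by (simp add: ac_simps)
  also have "\<dots> = (\<Sum>x\<in>S. ?c x * (\<Sum>z\<in>weyl_index n. (-1) ^ symp_form z x))"
    by (subst sum.swap) (simp add: sum_distrib_left)
  also have "\<dots> = (\<Sum>x\<in>S. if x = weyl_zero n then ?c x * 4 ^ n else 0)"
    by (intro sum.cong refl) (simp add: sum_neg_one_power_symp stabilizer_group_weyl_index[OF S])
  also have "\<dots> = 2 ^ n"
    using pure
    by (simp add: four_power_eq stabilizer_group_finite[OF S] stabilizer_group_weyl_zero[OF S]
        stabilizer_group_sign_weyl_zero[OF S] expval_weyl_zero pure_state_def)
  finally show ?thesis .
qed

lemma sum_inner_twisted_stabilizer_proj_sq:
  assumes S: "stabilizer_group n S s"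
  shows "(\<Sum>z\<in>weyl_index n. (Defs.inner n \<psi> (stabilizer_proj n S (\<lambda>x. s x * (-1) ^ symp_form z x) \<psi>))\<^sup>2)
    = (\<Sum>x\<in>S. (expval n \<psi> x)\<^sup>2)"
proof -
  let ?c = "\<lambda>x. s x * expval n \<psi> x / 2 ^ n"
  have SV: "x \<in> S \<Longrightarrow> x \<in> weyl_index n" for x
    by (rule stabilizer_group_weyl_index[OF S])
  have "(\<Sum>z\<in>weyl_index n. (Defs.inner n \<psi> (stabilizer_proj n S (\<lambda>x. s x * (-1) ^ symp_form z x) \<psi>))\<^sup>2)
      = (\<Sum>z\<in>weyl_index n. \<Sum>x\<in>S. \<Sum>y\<in>S. ?c x * ?c y * (-1) ^ symp_form z (padd x y))"
    unfolding inner_stabilizer_proj_eq_sum_expval power2_eq_square sum_product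
    by (intro sum.cong refl) (simp add: neg_one_power_symp_padd_right[where n = n] SV ac_simps)
  also have "\<dots> = (\<Sum>x\<in>S. \<Sum>y\<in>S. ?c x * ?c y * (\<Sum>z\<in>weyl_index n. (-1) ^ symp_form z (padd x y)))"
    by (subst sum.swap, rule sum.cong[OF refl], subst sum.swap) (simp add: sum_distrib_left)
  also have "\<dots> = (\<Sum>x\<in>S. \<Sum>y\<in>S. if x = y then ?c x * ?c y * 4 ^ n else 0)"
    by (intro sum.cong refl) (simp add: sum_neg_one_power_symp SV padd_eq_weyl_zero_iff[where n = n])
  also have "\<dots> = (\<Sum>x\<in>S. (s x * s x) * (expval n \<psi> x)\<^sup>2)"
    by (simp add: stabilizer_group_finite[OF S] four_power_eq power2_eq_square field_simps)
  also have "\<dots> = (\<Sum>x\<in>S. (expval n \<psi> x)\<^sup>2)"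
    using stabilizer_group_sign[OF S] by (intro sum.cong refl) force
  finally show ?thesis .
qed

lemma le_stabilizer_fidelity:
  assumes "pure_state n \<psi>" and "stabilizer_state n \<phi>"
  shows "(cmod (Defs.inner n \<phi> \<psi>))\<^sup>2 \<le> stabilizer_fidelity n \<psi>"
  unfolding stabilizer_fidelity_def
proof (rule cSup_upper)
  show "(cmod (Defs.inner n \<phi> \<psi>))\<^sup>2 \<in> {(cmod (Defs.inner n \<phi> \<psi>))\<^sup>2 |\<phi>. stabilizer_state n \<phi>}"
    using assms(2) by blast
  show "bdd_above {(cmod (Defs.inner n \<phi> \<psi>))\<^sup>2 |\<phi>. stabilizer_state n \<phi>}"
    using assms(1) pure_state_inner_le_1
    by (intro bdd_aboveI[where M = 1]) (auto simp: stabilizer_state_def)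
qed

lemma ex_sum_power2_le_mult_sum:
  fixes w :: "'a \<Rightarrow> real"
  assumes "finite I" "I \<noteq> {}" "\<And>i. i \<in> I \<Longrightarrow> 0 \<le> w i"
  shows "\<exists>j\<in>I. (\<Sum>i\<in>I. (w i)\<^sup>2) \<le> w j * (\<Sum>i\<in>I. w i)"
proof -
  have "Max (w ` I) \<in> w ` I"
    using assms(1,2) by (intro Max_in) auto
  then obtain j where j: "j \<in> I" "w j = Max (w ` I)"
    by (metis imageE)
  then have "(\<Sum>i\<in>I. (w i)\<^sup>2) \<le> (\<Sum>i\<in>I. w j * w i)"
    unfolding power2_eq_square using assms by (intro sum_mono mult_right_mono) simp_all
  then show ?thesis
    using j(1) by (auto simp: sum_distrib_left)
qed

lemma sum_expval_sq_le_stabilizer_fidelity: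
  assumes pure: "pure_state n \<psi>" and S: "stabilizer_group n S s" and card: "card S = 2 ^ n"
  shows "(\<Sum>x\<in>S. expval_sq n \<psi> x) / 2 ^ n \<le> stabilizer_fidelity n \<psi>"
proof -
  let ?V = "weyl_index n"
  let ?P = "\<lambda>z. stabilizer_proj n S (\<lambda>x. s x * (-1) ^ symp_form z x) \<psi>"
  define w where "w z = (\<Sum>v\<in>bits n. (cmod (?P z v))\<^sup>2)" for z
  have w: "Defs.inner n \<psi> (?P z) = of_real (w z)" if "z \<in> ?V" for z
    using inner_stabilizer_proj_self[OF stabilizer_group_twist[OF S that] card]
    by (simp add: w_def inner_self)
  have "complex_of_real (\<Sum>z\<in>?V. w z) = 2 ^ n"
    using sum_inner_twisted_stabilizer_proj[OF pure S] by (simp add: w)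
  then have sum_w: "(\<Sum>z\<in>?V. w z) = 2 ^ n"
    by (metis of_real_eq_iff of_real_numeral of_real_power)
  have "complex_of_real (\<Sum>z\<in>?V. (w z)\<^sup>2) = complex_of_real (\<Sum>x\<in>S. expval_sq n \<psi> x)"
    using sum_inner_twisted_stabilizer_proj_sq[OF S, of \<psi>]
    by (simp add: w expval_power2 stabilizer_group_weyl_index[OF S])
  then have sum_w_sq: "(\<Sum>z\<in>?V. (w z)\<^sup>2) = (\<Sum>x\<in>S. expval_sq n \<psi> x)"
    by (simp only: of_real_eq_iff)
  have "\<exists>z0\<in>?V. (\<Sum>z\<in>?V. (w z)\<^sup>2) \<le> w z0 * (\<Sum>z\<in>?V. w z)"
    by (rule ex_sum_power2_le_mult_sum) (simp, metis empty_iff weyl_zero_in_weyl_index, simp add: w_def sum_nonneg)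
  then obtain z0 where z0: "z0 \<in> ?V" and "(\<Sum>z\<in>?V. (w z)\<^sup>2) \<le> w z0 * (\<Sum>z\<in>?V. w z)"
    by blast
  then have "(\<Sum>x\<in>S. expval_sq n \<psi> x) \<le> w z0 * 2 ^ n"
    by (simp add: sum_w sum_w_sq)
  then have bound: "(\<Sum>x\<in>S. expval_sq n \<psi> x) / 2 ^ n \<le> w z0"
    by (simp add: pos_divide_le_eq)
  have "expval_sq n \<psi> (weyl_zero n) = 1"
    using pure by (simp add: expval_sq_def expval_weyl_zero pure_state_def)
  then have "1 \<le> (\<Sum>x\<in>S. expval_sq n \<psi> x)"
    using member_le_sum[of "weyl_zero n" S "expval_sq n \<psi>"] expval_sq_nonneg
    by (simp add: stabilizer_group_weyl_zero[OF S] stabilizer_group_finite[OF S])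
  then have "0 < (\<Sum>x\<in>S. expval_sq n \<psi> x) / 2 ^ n"
    by simp
  then have "0 < w z0"
    using bound by linarith
  then obtain \<phi> where "stabilizer_state n \<phi>" "(cmod (Defs.inner n \<phi> \<psi>))\<^sup>2 = w z0"
    using stabilizer_state_of_stabilizer_proj[OF stabilizer_group_twist[OF S z0] card w[OF z0]] by blast
  then show ?thesis
    using bound le_stabilizer_fidelity[OF pure] by fastforce
qed

theorem proposition6p1:
  fixes n :: nat and \<psi> :: "bool list \<Rightarrow> complex"
  assumes "pure_state n \<psi>"
  shows "(4 * eta n \<psi> - 1) / 3 \<le> stabilizer_fidelity n \<psi>"
proof -
  obtain S s where S: "stabilizer_group n S s" and heavy: "heavy_set n \<psi> \<subseteq> S" and card: "card S = 2 ^ n"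
    using maximal_stabilizer_group_containing[of "heavy_set n \<psi>" n] heavy_set_commuting[OF assms]
    by (auto simp: heavy_set_def)
  have "(4 * eta n \<psi> - 1) / 3 \<le> (\<Sum>x\<in>heavy_set n \<psi>. expval_sq n \<psi> x) / 2 ^ n"
    using eta_le_heavy_set[OF assms] by (simp add: field_simps)
  also have "\<dots> \<le> (\<Sum>x\<in>S. expval_sq n \<psi> x) / 2 ^ n"
    using heavy stabilizer_group_finite[OF S]
    by (intro divide_right_mono sum_mono2 expval_sq_nonneg) auto
  also have "\<dots> \<le> stabilizer_fidelity n \<psi>"
    by (rule sum_expval_sq_le_stabilizer_fidelity[OF assms S card])
  finally show ?thesis .
qed

end
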